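(* For any $x\in\mathbb{R}^n$ and $0<\delta<2$, with $z=x-\delta(a_{i^*}^Tx-b_{i^*})^+a_{i^*}$ (where $i^*$ is selected at $x$), $$\mathbb{E}_{\mathbb{S}}[d(z,P)^2]\le\mathbb{E}_{\mathbb{S}}\big[\|x-\mathcal{P}(x)-\delta(a_{i^*}^Tx-b_{i^*})^+a_{i^*}\|^2\big]\le h(\delta)\,d(x,P)^2,$$ where $\eta=2\delta-\delta^2$ and $h(\delta)=1-\eta\mu_1<1$.
   Context: Let $A\in\mathbb{R}^{m\times n}$ have rows $a_1^T,\dots,a_m^T$ with $\|a_i\|_2=1$, and $b\in\mathbb{R}^m$; assume $Ax\le b$ is consistent and let $P=\{x:Ax\le b\}$, $\mathcal{P}(x)$ the Euclidean projection onto $P$, $d(x,P)=\|x-\mathcal{P}(x)\|$, $t^+=\max\{t,0\}$. Fix an integer $1\le\beta\le m$. Sampling distribution $\mathbb{S}$ at $x$: $\tau\subseteq\{1,\dots,m\}$ with $|\tau|=\beta$ uniformly at random, and $i^*\in\tau$ maximizing $(a_i^Tx-b_i)^+$ over $\tau$; $\mathbb{E}_{\mathbb{S}}$ is expectation over $\tau$. $L>0$ is a Hoffman constant ($d(x,P)^2\le L^2\|(Ax-b)^+\|^2$ for all $x$); $\mu_1=\frac1{mL^2}$. *)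

theory Defs
  imports "HOL-Analysis.Analysis"
begin

text \<open>Rows of A are A $ i (i ranges over the finite index type 'm, so m = CARD('m)).\<close>

definition pospart :: "real \<Rightarrow> real" where
  "pospart t = max t 0"

definition polyh :: "real^'n^'m \<Rightarrow> real^'m \<Rightarrow> (real^'n) set" where
  "polyh A b = {x. \<forall>i. (A $ i) \<bullet> x \<le> b $ i}"

definition resid_pos :: "real^'n^'m \<Rightarrow> real^'m \<Rightarrow> real^'n \<Rightarrow> real^'m" where
  "resid_pos A b x = (\<chi> i. pospart ((A $ i) \<bullet> x - b $ i))"

definition samples :: "nat \<Rightarrow> ('m::finite) set set" where
  "samples \<beta> = {\<tau>. card \<tau> = \<beta>}"

definition expS :: "nat \<Rightarrow> (('m::finite) set \<Rightarrow> real) \<Rightarrow> real" where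
  "expS \<beta> f = (\<Sum>\<tau>\<in>samples \<beta>. f \<tau>) / real (card (samples \<beta> :: 'm set set))"

definition greedy_sel :: "real^'n^'m \<Rightarrow> real^'m \<Rightarrow> real^'n \<Rightarrow> nat \<Rightarrow> (('m::finite) set \<Rightarrow> 'm) \<Rightarrow> bool" where
  "greedy_sel A b x \<beta> sel = (\<forall>\<tau>\<in>samples \<beta>. sel \<tau> \<in> \<tau> \<and>
      (\<forall>j\<in>\<tau>. pospart ((A $ j) \<bullet> x - b $ j) \<le> pospart ((A $ sel \<tau>) \<bullet> x - b $ sel \<tau>)))"

end

theory Submission imports Defs begin

text \<open>For p = P(x), the inner product of the row a of the selected constraint with x - p is at
least its positive residual r, since a p \<le> b. Expanding the square gives
|x - p - \<delta> r a|^2 \<le> d(x,P)^2 - (2\<delta> - \<delta>^2) r^2, and d(z,P) \<le> |z - p| gives the first inequality.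
Because sel \<tau> maximizes the residual over \<tau>, \<beta> r^2 dominates the sum of the squared residuals
over \<tau>; every row lies in the same fraction \<beta>/m of the samples, so E r^2 \<ge> |(Ax - b)+|^2/m,
and the Hoffman bound turns this into E r^2 \<ge> \<mu>1 d(x,P)^2.\<close>

lemma pospart_nonneg: "0 \<le> pospart t"
  by (simp add: pospart_def)

lemma card_samples: "card (samples k :: ('m::finite) set set) = CARD('m) choose k"
  using n_subsets[of "UNIV::'m set" k] by (simp add: samples_def)

lemma card_samples_containing:
  fixes i :: "'m::finite"
  assumes "1 \<le> k"
  shows "card {\<tau>\<in>samples k. i \<in> \<tau>} = (CARD('m) - 1) choose (k - 1)"
proof -
  have "{\<tau>\<in>samples k. i \<in> \<tau>} = insert i ` {B. B \<subseteq> UNIV - {i} \<and> card B = k - 1}"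
  proof (intro set_eqI iffI)
    fix \<tau> assume "\<tau> \<in> {\<tau>\<in>samples k. i \<in> \<tau>}"
    then have "card (\<tau> - {i}) = k - 1" "\<tau> = insert i (\<tau> - {i})"
      by (auto simp: samples_def)
    then show "\<tau> \<in> insert i ` {B. B \<subseteq> UNIV - {i} \<and> card B = k - 1}" by blast
  next
    fix \<tau> assume "\<tau> \<in> insert i ` {B. B \<subseteq> UNIV - {i} \<and> card B = k - 1}"
    then obtain B where "i \<notin> B" "card B = k - 1" "\<tau> = insert i B" by auto
    then show "\<tau> \<in> {\<tau>\<in>samples k. i \<in> \<tau>}" using assms by (simp add: samples_def)
  qed
  moreover have "inj_on (insert i) {B. B \<subseteq> UNIV - {i} \<and> card B = k - 1}"
    by (rule inj_onI) blast
  ultimately show ?thesis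
    using n_subsets[of "UNIV - {i} :: 'm set" "k - 1"] by (simp add: card_image)
qed

lemma sum_samples_sum:
  fixes g :: "'m::finite \<Rightarrow> real"
  assumes "1 \<le> k"
  shows "(\<Sum>\<tau>\<in>samples k. \<Sum>i\<in>\<tau>. g i) = real ((CARD('m) - 1) choose (k - 1)) * sum g UNIV"
proof -
  have "(\<Sum>\<tau>\<in>samples k. \<Sum>i\<in>\<tau>. g i) = (\<Sum>\<tau>\<in>samples k. \<Sum>i\<in>UNIV. if i \<in> \<tau> then g i else 0)"
    by (simp add: sum.If_cases Int_absorb1)
  also have "\<dots> = (\<Sum>i\<in>UNIV. \<Sum>\<tau>\<in>samples k. if i \<in> \<tau> then g i else 0)"
    by (rule sum.swap)
  also have "\<dots> = (\<Sum>i\<in>UNIV. real (card {\<tau>\<in>samples k. i \<in> \<tau>}) * g i)"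
    by (simp add: sum.If_cases samples_def Int_def)
  also have "\<dots> = real ((CARD('m) - 1) choose (k - 1)) * sum g UNIV"
    by (simp add: card_samples_containing[OF assms] sum_distrib_left)
  finally show ?thesis .
qed

lemma expS_mono:
  assumes "\<And>\<tau>. \<tau> \<in> samples k \<Longrightarrow> f \<tau> \<le> g \<tau>"
  shows "expS k f \<le> expS k g"
  unfolding expS_def by (rule divide_right_mono) (auto intro: sum_mono assms)

lemma expS_diff: "expS k (\<lambda>\<tau>. f \<tau> - g \<tau>) = expS k f - expS k g"
  by (simp add: expS_def sum_subtractf diff_divide_distrib)

lemma expS_mult_left: "expS k (\<lambda>\<tau>. c * f \<tau>) = c * expS k f"
  by (simp add: expS_def sum_distrib_left)

lemma expS_const:
  assumes "k \<le> CARD('m::finite)"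
  shows "expS k (\<lambda>_::'m set. c) = c"
  using assms by (simp add: expS_def card_samples)

lemma expS_sum_over_sample:
  fixes g :: "'m::finite \<Rightarrow> real"
  assumes "1 \<le> k" "k \<le> CARD('m)"
  shows "expS k (\<lambda>\<tau>. \<Sum>i\<in>\<tau>. g i) = real k / real CARD('m) * sum g UNIV"
proof -
  have "real k * real (CARD('m) choose k) = real CARD('m) * real ((CARD('m) - 1) choose (k - 1))"
    using times_binomial_minus1_eq[of k "CARD('m)"] assms by (metis of_nat_mult not_one_le_zero neq0_conv)
  moreover have "CARD('m) choose k > 0" using assms by simp
  ultimately show ?thesis
    using assms by (simp add: expS_def sum_samples_sum card_samples field_simps)
qed

lemma closed_polyh: "closed (polyh A b)"
proof -
  have "polyh A b = (\<Inter>i. {y. (A $ i) \<bullet> y \<le> b $ i})" by (auto simp: polyh_def)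
  then show ?thesis by (simp add: closed_INT closed_halfspace_le)
qed

lemma norm_resid_pos_power2: "(norm (resid_pos A b x))\<^sup>2 = (\<Sum>i\<in>UNIV. (pospart ((A $ i) \<bullet> x - b $ i))\<^sup>2)"
  unfolding power2_norm_eq_inner inner_vec_def[of "resid_pos A b x"]
  by (simp add: resid_pos_def power2_eq_square)

lemma norm_relaxed_step_power2_le:
  fixes a x p :: "'a::real_inner"
  assumes "norm a = 1" "a \<bullet> p \<le> c" "0 \<le> \<delta>"
  shows "(norm (x - p - (\<delta> * pospart (a \<bullet> x - c)) *\<^sub>R a))\<^sup>2
           \<le> (norm (x - p))\<^sup>2 - (2*\<delta> - \<delta>\<^sup>2) * (pospart (a \<bullet> x - c))\<^sup>2"
proof -
  define r where "r = pospart (a \<bullet> x - c)"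
  have "a \<bullet> a = 1" using assms(1) by (metis norm_eq_1)
  then have expand: "(norm (x - p - (\<delta> * r) *\<^sub>R a))\<^sup>2 = (norm (x - p))\<^sup>2 - 2 * \<delta> * (r * (a \<bullet> (x - p))) + (\<delta> * r)\<^sup>2"
    unfolding power2_norm_eq_inner
    by (simp add: inner_diff_left inner_diff_right inner_commute power2_eq_square algebra_simps)
  have "r\<^sup>2 \<le> r * (a \<bullet> (x - p))"
  proof (cases "0 \<le> a \<bullet> x - c")
    case True
    then have "r = a \<bullet> x - c" by (simp add: r_def pospart_def)
    moreover have "a \<bullet> x - c \<le> a \<bullet> (x - p)" using assms(2) by (simp add: inner_diff_right)
    ultimately show ?thesis using True by (simp add: power2_eq_square mult_left_mono)
  qed (simp add: r_def pospart_def)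
  then have "2 * \<delta> * r\<^sup>2 \<le> 2 * \<delta> * (r * (a \<bullet> (x - p)))"
    using assms(3) by (simp add: mult_left_mono)
  then show ?thesis
    unfolding r_def[symmetric] expand by (simp add: power_mult_distrib algebra_simps)
qed

lemma greedy_sel_sum_le:
  assumes "greedy_sel A b x k sel" "\<tau> \<in> samples k"
  shows "(\<Sum>i\<in>\<tau>. (pospart ((A $ i) \<bullet> x - b $ i))\<^sup>2)
           \<le> real k * (pospart ((A $ sel \<tau>) \<bullet> x - b $ sel \<tau>))\<^sup>2"
proof -
  have "card \<tau> = k" "\<forall>j\<in>\<tau>. pospart ((A $ j) \<bullet> x - b $ j) \<le> pospart ((A $ sel \<tau>) \<bullet> x - b $ sel \<tau>)"
    using assms by (auto simp: samples_def greedy_sel_def)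
  then show ?thesis
    using sum_mono[of \<tau> "\<lambda>i. (pospart ((A $ i) \<bullet> x - b $ i))\<^sup>2"
                       "\<lambda>_. (pospart ((A $ sel \<tau>) \<bullet> x - b $ sel \<tau>))\<^sup>2"]
    by (simp add: power_mono pospart_nonneg)
qed

lemma greedy_sel_expS_ge:
  fixes A :: "real^'n^('m::finite)"
  assumes "greedy_sel A b x k sel" "1 \<le> k" "k \<le> CARD('m)"
  shows "(norm (resid_pos A b x))\<^sup>2 / real CARD('m)
           \<le> expS k (\<lambda>\<tau>. (pospart ((A $ sel \<tau>) \<bullet> x - b $ sel \<tau>))\<^sup>2)"
proof -
  have "real k / real CARD('m) * (norm (resid_pos A b x))\<^sup>2
        = expS k (\<lambda>\<tau>. \<Sum>i\<in>\<tau>. (pospart ((A $ i) \<bullet> x - b $ i))\<^sup>2)"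
    using assms(2,3) by (simp add: expS_sum_over_sample norm_resid_pos_power2)
  also have "\<dots> \<le> real k * expS k (\<lambda>\<tau>. (pospart ((A $ sel \<tau>) \<bullet> x - b $ sel \<tau>))\<^sup>2)"
    unfolding expS_mult_left[symmetric] by (intro expS_mono greedy_sel_sum_le[OF assms(1)])
  finally show ?thesis
    using assms(2) by (simp add: field_simps)
qed

lemma expS_greedy_step_le:
  fixes A :: "real^'n^('m::finite)"
  assumes rows: "\<forall>i. norm (A $ i) = 1" and "p \<in> polyh A b"
    and sel: "greedy_sel A b x k sel" and k: "1 \<le> k" "k \<le> CARD('m)"
    and "0 \<le> \<delta>" "\<delta> \<le> 2" "0 < L"
    and hoffman: "(norm (x - p))\<^sup>2 \<le> L\<^sup>2 * (norm (resid_pos A b x))\<^sup>2"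
  shows "expS k (\<lambda>\<tau>. (norm (x - p - (\<delta> * pospart ((A $ sel \<tau>) \<bullet> x - b $ sel \<tau>)) *\<^sub>R (A $ sel \<tau>)))\<^sup>2)
           \<le> (1 - (2*\<delta> - \<delta>\<^sup>2) * (1 / (real CARD('m) * L\<^sup>2))) * (norm (x - p))\<^sup>2"
    (is "expS k (\<lambda>\<tau>. (norm (x - p - (\<delta> * ?r \<tau>) *\<^sub>R (A $ sel \<tau>)))\<^sup>2) \<le> (1 - ?\<eta> * ?\<mu>) * _")
proof -
  have "?\<mu> * (norm (x - p))\<^sup>2 \<le> ?\<mu> * (L\<^sup>2 * (norm (resid_pos A b x))\<^sup>2)"
    using hoffman by (rule mult_left_mono) simp
  also have "\<dots> = (norm (resid_pos A b x))\<^sup>2 / real CARD('m)"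
    using \<open>0 < L\<close> by (simp add: field_simps)
  also have "\<dots> \<le> expS k (\<lambda>\<tau>. (?r \<tau>)\<^sup>2)"
    by (rule greedy_sel_expS_ge[OF sel k])
  finally have expected_residual: "?\<mu> * (norm (x - p))\<^sup>2 \<le> expS k (\<lambda>\<tau>. (?r \<tau>)\<^sup>2)" .
  have "?\<eta> \<ge> 0"
    using mult_right_mono[OF \<open>\<delta> \<le> 2\<close> \<open>0 \<le> \<delta>\<close>] by (simp add: power2_eq_square)
  have "expS k (\<lambda>\<tau>. (norm (x - p - (\<delta> * ?r \<tau>) *\<^sub>R (A $ sel \<tau>)))\<^sup>2)
          \<le> expS k (\<lambda>\<tau>. (norm (x - p))\<^sup>2 - ?\<eta> * (?r \<tau>)\<^sup>2)"
    using assms(2,6) rows by (intro expS_mono norm_relaxed_step_power2_le) (auto simp: polyh_def)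
  also have "\<dots> = (norm (x - p))\<^sup>2 - ?\<eta> * expS k (\<lambda>\<tau>. (?r \<tau>)\<^sup>2)"
    by (simp add: expS_diff expS_mult_left expS_const[OF k(2)])
  also have "\<dots> \<le> (1 - ?\<eta> * ?\<mu>) * (norm (x - p))\<^sup>2"
    using mult_left_mono[OF expected_residual \<open>?\<eta> \<ge> 0\<close>] by (simp add: algebra_simps)
  finally show ?thesis .
qed

theorem lemma9:
  fixes A :: "real^'n^('m::finite)" and b :: "real^'m" and L \<delta> :: real and \<beta> :: nat
    and x :: "real^'n" and sel :: "'m set \<Rightarrow> 'm"
  assumes rows: "\<forall>i. norm (A $ i) = 1"
    and cons: "polyh A b \<noteq> {}"
    and beta: "1 \<le> \<beta>" "\<beta> \<le> CARD('m)"
    and Lpos: "L > 0"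
    and hoff: "\<forall>y. (norm (y - closest_point (polyh A b) y))^2 \<le> L^2 * (norm (resid_pos A b y))^2"
    and delta: "0 < \<delta>" "\<delta> < 2"
    and sel: "greedy_sel A b x \<beta> sel"
  shows "let P = polyh A b; \<mu>1 = 1 / (real CARD('m) * L^2); \<eta> = 2*\<delta> - \<delta>^2; h = 1 - \<eta> * \<mu>1;
             r = (\<lambda>\<tau>. pospart ((A $ sel \<tau>) \<bullet> x - b $ sel \<tau>));
             z = (\<lambda>\<tau>. x - (\<delta> * r \<tau>) *\<^sub>R (A $ sel \<tau>))
         in expS \<beta> (\<lambda>\<tau>. (norm (z \<tau> - closest_point P (z \<tau>)))^2)
              \<le> expS \<beta> (\<lambda>\<tau>. (norm (x - closest_point P x - (\<delta> * r \<tau>) *\<^sub>R (A $ sel \<tau>)))^2)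
          \<and> expS \<beta> (\<lambda>\<tau>. (norm (x - closest_point P x - (\<delta> * r \<tau>) *\<^sub>R (A $ sel \<tau>)))^2)
              \<le> h * (norm (x - closest_point P x))^2
          \<and> h < 1"
proof -
  define P where "P = polyh A b"
  define p where "p = closest_point P x"
  have "p \<in> P"
    unfolding p_def P_def using closest_point_in_set[OF closed_polyh cons] .
  have projection: "(norm (x - v - closest_point P (x - v)))\<^sup>2 \<le> (norm (x - p - v))\<^sup>2" for v
  proof -
    have "dist (x - v) (closest_point P (x - v)) \<le> dist (x - v) p"
      using closest_point_le[OF closed_polyh \<open>p \<in> P\<close>[unfolded P_def]] by (simp add: P_def)
    then show ?thesis by (simp add: dist_norm Groups.diff_right_commute[of x v p] power_mono)
  qed
  have "(norm (x - p))\<^sup>2 \<le> L\<^sup>2 * (norm (resid_pos A b x))\<^sup>2"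
    using hoff by (simp add: p_def P_def)
  note step = expS_greedy_step_le[OF rows \<open>p \<in> P\<close>[unfolded P_def] sel beta
                                   less_imp_le[OF delta(1)] less_imp_le[OF delta(2)] Lpos this]
  have "(2*\<delta> - \<delta>\<^sup>2) * (1 / (real CARD('m) * L\<^sup>2)) > 0"
    using delta Lpos by (simp add: power2_eq_square)
  with step expS_mono[OF projection] show ?thesis
    unfolding Let_def P_def[symmetric] p_def[symmetric] by auto
qed

end
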